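(* For all odd integers $n\ge1$ and real numbers $a\ge1$, $x\in(0,\pi)$, we have $S_{n,a}(x)\ge\sin(x)$. Equality holds if and only if $n=1$, or $n=3$, $a=1$, $x=2\pi/3$.
   Context: For a real number $a$ and integers $0\le m$, $\binom{m+a}{m}=\frac{(a+1)(a+2)\cdots(a+m)}{m!}$ (equal to $1$ when $m=0$). For an integer $n\ge1$, $S_{n,a}(x)=\sum_{j=1}^n\binom{n+a-j}{n-j}\sin(jx)$. *)

theory Defs
  imports "HOL-Analysis.Analysis"
begin

text \<open>binom m a = (a+1)(a+2)...(a+m)/m!, i.e. the binomial coefficient (m+a choose m).\<close>
definition binom :: "nat \<Rightarrow> real \<Rightarrow> real" where
  "binom m a = (\<Prod>i=1..m. a + real i) / fact m"

definition S :: "nat \<Rightarrow> real \<Rightarrow> real \<Rightarrow> real" where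
  "S n a x = (\<Sum>j=1..n. binom (n - j) a * sin (real j * x))"

end

theory Submission
  imports Defs
begin

text \<open>
  Iterating the hockey-stick identity twice gives
  \<open>binom m a = (\<Sum>i\<le>m. binom i (a - 2) * (m - i + 1))\<close>, hence
  \<open>S n a = (\<Sum>i\<le>n. binom i (a - 2) * S (n - i) 1)\<close>: for \<open>a \<ge> 1\<close> a combination with
  nonnegative weights, of weight one at \<open>i = 0\<close>, of the Fejer-type sums
  \<open>S m 1 x = (\<Sum>j=1..m. (m + 1 - j) * sin (j * x))\<close>. These satisfy
  \<open>2 (1 - cos x) S m 1 x = (m + 1) sin x - sin ((m + 1) x)\<close>, so the bound
  \<open>\<bar>sin (m x)\<bar> \<le> m sin x\<close> (strict for \<open>m \<ge> 2\<close>) makes them positive for \<open>m \<ge> 1\<close>, and for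
  \<open>m = 2k + 1\<close> it gives \<open>(1 - cos x) (S m 1 x - sin x) = k sin x - cos ((k + 2) x) sin (k x) \<ge> 0\<close>,
  which vanishes only for \<open>k = 0\<close> or \<open>k = 1, x = 2\<pi>/3\<close>.
\<close>

lemma binom_eq_gbinomial: "binom m a = (a + real m) gchoose m"
proof -
  have "(\<Prod>i=1..m. a + real i) = pochhammer (a + 1) m"
    unfolding pochhammer_prod by (rule prod.reindex_bij_witness[of _ Suc "\<lambda>i. i - 1"]) auto
  then show ?thesis by (simp add: binom_def gbinomial_pochhammer')
qed

lemma binom_0_left [simp]: "binom 0 a = 1"
  by (simp add: binom_def)

lemma binom_1_left: "binom 1 a = a + 1"
  by (simp add: binom_def)

lemma binom_0_right [simp]: "binom m 0 = 1"
  by (simp add: binom_def fact_prod)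

lemma binom_nonneg: "a \<ge> -1 \<Longrightarrow> binom m a \<ge> 0"
  unfolding binom_def by (intro divide_nonneg_pos prod_nonneg) auto

lemma binom_sum_lower: "binom m a = (\<Sum>i\<le>m. binom i (a - 1))"
  using gbinomial_parallel_sum[of "a - 1" m] by (simp add: binom_eq_gbinomial)

lemma binom_1_right: "binom m 1 = real m + 1"
  using binom_sum_lower[of m 1] by simp

lemma binom_Suc_left: "binom (Suc m) a = binom (Suc m) (a - 1) + binom m a"
  using binom_sum_lower[of "Suc m" a] binom_sum_lower[of m a] by simp

lemma binom_convolution: "binom m a = (\<Sum>i\<le>m. binom i (a - 2) * binom (m - i) 1)"
proof (induction m)
  case 0
  then show ?case by simp
next
  case (Suc m)
  have "(\<Sum>i\<le>Suc m. binom i (a - 2) * binom (Suc m - i) 1)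
      = (\<Sum>i\<le>m. binom i (a - 2) * binom (m - i) 1) + (\<Sum>i\<le>Suc m. binom i (a - 2))"
    by (simp add: binom_1_right Suc_diff_le sum.distrib[symmetric] algebra_simps)
  also have "\<dots> = binom m a + binom (Suc m) (a - 1)"
    using Suc binom_sum_lower[of "Suc m" "a - 1"] by simp
  finally show ?case
    using binom_Suc_left[of m a] by simp
qed

lemma S_0 [simp]: "S 0 a x = 0"
  by (simp add: S_def)

lemma S_convolution: "S n a x = (\<Sum>i\<le>n. binom i (a - 2) * S (n - i) 1 x)"
proof -
  let ?h = "\<lambda>j i. binom i (a - 2) * binom (n - i - j) 1 * sin (real j * x)"
  have "S n a x = (\<Sum>j\<in>{1..n}. \<Sum>i\<in>{i. i \<in> {..n} \<and> i + j \<le> n}. ?h j i)"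
    unfolding S_def
  proof (rule sum.cong[OF refl])
    fix j assume "j \<in> {1..n}"
    then have "{i. i \<in> {..n} \<and> i + j \<le> n} = {..n - j}" by auto
    then show "binom (n - j) a * sin (real j * x) = (\<Sum>i\<in>{i. i \<in> {..n} \<and> i + j \<le> n}. ?h j i)"
      by (simp add: binom_convolution[of "n - j"] sum_distrib_right diff_commute add.commute)
  qed
  also have "\<dots> = (\<Sum>i\<in>{..n}. \<Sum>j\<in>{j. j \<in> {1..n} \<and> i + j \<le> n}. ?h j i)"
    by (rule sum.swap_restrict) auto
  also have "\<dots> = (\<Sum>i\<le>n. binom i (a - 2) * S (n - i) 1 x)"
  proof (rule sum.cong[OF refl])
    fix i assume "i \<in> {..n}"
    then have "{j. j \<in> {1..n} \<and> i + j \<le> n} = {1..n - i}" by auto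
    then show "(\<Sum>j\<in>{j. j \<in> {1..n} \<and> i + j \<le> n}. ?h j i) = binom i (a - 2) * S (n - i) 1 x"
      by (simp add: S_def sum_distrib_left mult.assoc)
  qed
  finally show ?thesis .
qed

lemma sin_add_plus_sin_diff: "sin (t + x :: real) + sin (t - x) = 2 * cos x * sin t"
  by (simp add: sin_add sin_diff)

lemma one_minus_cos_mult_sum_sin:
  "2 * (1 - cos x) * (\<Sum>j=1..m. sin (real j * x)) = sin x + sin (real m * x) - sin (real (Suc m) * x)"
proof (induction m)
  case 0
  then show ?case by simp
next
  case (Suc m)
  have "sin (real (Suc (Suc m)) * x) + sin (real m * x) = 2 * cos x * sin (real (Suc m) * x)"
    using sin_add_plus_sin_diff[of "real (Suc m) * x" x] by (simp add: algebra_simps)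
  with Suc show ?case by (simp add: algebra_simps)
qed

lemma S_at_1: "S m 1 x = (\<Sum>j=1..m. real (Suc m - j) * sin (real j * x))"
  unfolding S_def by (rule sum.cong[OF refl]) (auto simp: binom_1_right)

lemma S_at_1_Suc: "S (Suc m) 1 x = S m 1 x + (\<Sum>j=1..Suc m. sin (real j * x))"
proof -
  have "S (Suc m) 1 x = (\<Sum>j=1..Suc m. real (Suc m - j) * sin (real j * x) + sin (real j * x))"
    unfolding S_at_1 by (rule sum.cong[OF refl]) (auto simp: Suc_diff_le algebra_simps)
  then show ?thesis
    by (simp add: sum.distrib S_at_1)
qed

lemma one_minus_cos_mult_S_at_1:
  "2 * (1 - cos x) * S m 1 x = real (Suc m) * sin x - sin (real (Suc m) * x)"
proof (induction m)
  case 0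
  then show ?case by simp
next
  case (Suc m)
  then show ?case
    using one_minus_cos_mult_sum_sin[of x "Suc m"] by (simp add: S_at_1_Suc algebra_simps)
qed

lemma abs_sin_add_le: "\<bar>sin (t + x :: real)\<bar> \<le> \<bar>sin t\<bar> * \<bar>cos x\<bar> + \<bar>cos t\<bar> * \<bar>sin x\<bar>"
  unfolding sin_add abs_mult[symmetric] by (rule abs_triangle_ineq)

lemma abs_cos_less_one: "sin (x :: real) \<noteq> 0 \<Longrightarrow> \<bar>cos x\<bar> < 1"
proof -
  assume "sin x \<noteq> 0"
  then have "(sin x)\<^sup>2 > 0" by simp
  then have "(cos x)\<^sup>2 < 1" using sin_cos_squared_add[of x] by linarith
  then show ?thesis by (simp add: abs_square_less_1)
qed

lemma abs_sin_mult_le: "\<bar>sin (real m * x)\<bar> \<le> real m * \<bar>sin x\<bar>"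
proof (induction m)
  case 0
  then show ?case by simp
next
  case (Suc m)
  have "\<bar>sin (real (Suc m) * x)\<bar> \<le> \<bar>sin (real m * x)\<bar> * \<bar>cos x\<bar> + \<bar>cos (real m * x)\<bar> * \<bar>sin x\<bar>"
    using abs_sin_add_le[of "real m * x" x] by (simp add: algebra_simps)
  also have "\<dots> \<le> real m * \<bar>sin x\<bar> * 1 + 1 * \<bar>sin x\<bar>"
    using Suc abs_cos_le_one[of x] abs_cos_le_one[of "real m * x"]
    by (intro add_mono mult_mono) auto
  finally show ?case by (simp add: algebra_simps)
qed

lemma abs_sin_mult_less:
  assumes "sin x \<noteq> 0" and "m \<ge> 2"
  shows "\<bar>sin (real m * x)\<bar> < real m * \<bar>sin x\<bar>"
proof -
  obtain k where k: "m = Suc k" "k \<ge> 1" using assms(2) by (cases m) auto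
  have cos_less: "\<bar>cos x\<bar> < 1"
    using abs_cos_less_one[OF assms(1)] .
  have "\<bar>sin (real k * x)\<bar> * \<bar>cos x\<bar> < real k * \<bar>sin x\<bar>"
  proof (cases "sin (real k * x) = 0")
    case True
    then show ?thesis using assms(1) k by simp
  next
    case False
    then have "\<bar>sin (real k * x)\<bar> * \<bar>cos x\<bar> < \<bar>sin (real k * x)\<bar>"
      using cos_less by simp
    then show ?thesis using abs_sin_mult_le[of k x] by linarith
  qed
  moreover have "\<bar>cos (real k * x)\<bar> * \<bar>sin x\<bar> \<le> \<bar>sin x\<bar>"
    using abs_cos_le_one[of "real k * x"] by (simp add: mult_left_le_one_le)
  moreover have "\<bar>sin (real m * x)\<bar> \<le> \<bar>sin (real k * x)\<bar> * \<bar>cos x\<bar> + \<bar>cos (real k * x)\<bar> * \<bar>sin x\<bar>"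
    using abs_sin_add_le[of "real k * x" x] k by (simp add: algebra_simps)
  ultimately show ?thesis using k by (simp add: algebra_simps)
qed

lemma S_at_1_pos:
  assumes "0 < x" "x < pi" "m \<ge> 1"
  shows "S m 1 x > 0"
proof -
  have sin_pos: "sin x > 0" using assms by (simp add: sin_gt_zero)
  then have "\<bar>sin (real (Suc m) * x)\<bar> < real (Suc m) * sin x"
    using abs_sin_mult_less[of x "Suc m"] assms(3) by simp
  then have "2 * (1 - cos x) * S m 1 x > 0"
    unfolding one_minus_cos_mult_S_at_1 by linarith
  moreover have "1 - cos x > 0" using abs_cos_less_one[of x] sin_pos by linarith
  ultimately show ?thesis by (simp add: zero_less_mult_iff)
qed

lemma S_at_1_nonneg: "0 < x \<Longrightarrow> x < pi \<Longrightarrow> S m 1 x \<ge> 0"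
  using S_at_1_pos[of x m] by (cases m) auto

lemma one_minus_cos_mult_S_at_1_odd_minus_sin:
  "(1 - cos x) * (S (2 * k + 1) 1 x - sin x)
     = real k * sin x - cos (real (k + 2) * x) * sin (real k * x)"
proof -
  have "cos (real (k + 2) * x) * sin (real k * x) = (sin (real (2 * k + 2) * x) - sin (2 * x)) / 2"
  proof -
    have "real (k + 2) * x + real k * x = real (2 * k + 2) * x" "real (k + 2) * x - real k * x = 2 * x"
      by (simp_all add: algebra_simps)
    then show ?thesis by (simp add: cos_times_sin)
  qed
  moreover have "2 * (1 - cos x) * S (2 * k + 1) 1 x = real (2 * k + 2) * sin x - sin (real (2 * k + 2) * x)"
    using one_minus_cos_mult_S_at_1[of x "2 * k + 1"] by simp
  ultimately show ?thesis using sin_double[of x] by (simp add: algebra_simps)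
qed

lemma cos_three_mult_eq_one_iff:
  assumes "0 < x" "x < pi"
  shows "cos (3 * x) = 1 \<longleftrightarrow> x = 2 * pi / 3"
proof
  assume "cos (3 * x) = 1"
  then obtain n :: int where n: "3 * x = of_int n * 2 * pi" by (auto simp: cos_one_2pi_int)
  then have "of_int n * (2 * pi) = 3 * x" by simp
  with assms have "0 < of_int n * (2 * pi)" "of_int n * (2 * pi) < (3 / 2) * (2 * pi)" by simp_all
  then have "0 < real_of_int n" "real_of_int n < 3 / 2"
    by (simp_all only: zero_less_mult_iff mult_less_cancel_right) auto
  then have "n = 1" by linarith
  with n show "x = 2 * pi / 3" by simp
next
  assume "x = 2 * pi / 3"
  then have "3 * x = 2 * pi" by simp
  then show "cos (3 * x) = 1" by simp
qed

lemma odd_defect_nonneg: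
  assumes "0 < x" "x < pi"
  shows "real k * sin x - cos (real (k + 2) * x) * sin (real k * x) \<ge> 0 \<and>
         (real k * sin x - cos (real (k + 2) * x) * sin (real k * x) = 0
            \<longleftrightarrow> k = 0 \<or> (k = 1 \<and> x = 2 * pi / 3))"
proof -
  define G where "G = real k * sin x - cos (real (k + 2) * x) * sin (real k * x)"
  have sin_pos: "sin x > 0" using assms by (simp add: sin_gt_zero)
  have cos_sin_le: "\<bar>cos (real (k + 2) * x) * sin (real k * x)\<bar> \<le> \<bar>sin (real k * x)\<bar>"
    using abs_cos_le_one[of "real (k + 2) * x"] by (simp add: abs_mult mult_left_le_one_le)
  have "G \<ge> 0"
    using abs_sin_mult_le[of k x] cos_sin_le sin_pos unfolding G_def by simp
  moreover have "G = 0 \<longleftrightarrow> k = 0 \<or> (k = 1 \<and> x = 2 * pi / 3)"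
  proof (cases "k \<ge> 2")
    case True
    then have "G > 0"
      using abs_sin_mult_less[of x k] cos_sin_le sin_pos unfolding G_def by simp
    with True show ?thesis by auto
  next
    case False
    then consider "k = 0" | "k = 1" by linarith
    then show ?thesis
    proof cases
      case 2
      then have "G = sin x * (1 - cos (3 * x))" by (simp add: G_def algebra_simps)
      with 2 sin_pos show ?thesis using cos_three_mult_eq_one_iff[OF assms] by auto
    qed (simp add: G_def)
  qed
  ultimately show ?thesis unfolding G_def by blast
qed

lemma S_at_1_odd_ge_sin:
  assumes "0 < x" "x < pi" "odd n"
  shows "sin x \<le> S n 1 x \<and> (S n 1 x = sin x \<longleftrightarrow> n = 1 \<or> (n = 3 \<and> x = 2 * pi / 3))"
proof -
  obtain k where n: "n = 2 * k + 1" using assms(3) oddE by blast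
  define G where "G = real k * sin x - cos (real (k + 2) * x) * sin (real k * x)"
  have "sin x > 0" using assms by (simp add: sin_gt_zero)
  then have cos_less: "1 - cos x > 0" using abs_cos_less_one[of x] by linarith
  then have S_minus_sin: "S n 1 x - sin x = G / (1 - cos x)"
    using one_minus_cos_mult_S_at_1_odd_minus_sin[of x k] unfolding n G_def by (simp add: field_simps)
  have G: "G \<ge> 0" "G = 0 \<longleftrightarrow> k = 0 \<or> (k = 1 \<and> x = 2 * pi / 3)"
    using odd_defect_nonneg[OF assms(1,2), of k] unfolding G_def by auto
  have "G / (1 - cos x) \<ge> 0" using G(1) cos_less by simp
  then have "sin x \<le> S n 1 x" using S_minus_sin by linarith
  moreover have "S n 1 x = sin x \<longleftrightarrow> G = 0" using S_minus_sin cos_less by auto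
  ultimately show ?thesis using G(2) unfolding n by auto
qed

lemma S_ge_S_at_1:
  assumes "0 < x" "x < pi" "a \<ge> 1"
  shows "S n 1 x \<le> S n a x \<and> (S n a x = S n 1 x \<longleftrightarrow> n \<le> 1 \<or> a = 1)"
proof -
  define summand where "summand i = binom i (a - 2) * S (n - i) 1 x" for i
  have summand_nonneg: "summand i \<ge> 0" for i
    unfolding summand_def using assms by (intro mult_nonneg_nonneg binom_nonneg S_at_1_nonneg) auto
  have S_minus: "S n a x - S n 1 x = (\<Sum>i\<in>{1..n}. summand i)"
    unfolding S_convolution[of n a] summand_def by (simp add: atMost_atLeast0 sum.atLeast_Suc_atMost)
  have "(\<Sum>i\<in>{1..n}. summand i) > 0" if "n \<ge> 2" "a \<noteq> 1"
  proof (rule sum_pos2)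
    show "summand 1 > 0"
      unfolding summand_def binom_1_left using that assms S_at_1_pos[of x "n - 1"] by simp
  qed (use that summand_nonneg in auto)
  moreover have "(\<Sum>i\<in>{1..n}. summand i) = 0" if "n \<le> 1"
    using that by (cases n) (auto simp: summand_def)
  ultimately show ?thesis
    using S_minus sum_nonneg[of "{1..n}" summand] summand_nonneg by force
qed

theorem theorem3p1:
  fixes n :: nat and a x :: real
  assumes "odd n" and "n \<ge> 1" and "a \<ge> 1" and "0 < x" and "x < pi"
  shows "S n a x \<ge> sin x \<and>
         (S n a x = sin x \<longleftrightarrow> (n = 1 \<or> (n = 3 \<and> a = 1 \<and> x = 2 * pi / 3)))"
  using S_at_1_odd_ge_sin[OF assms(4,5,1)] S_ge_S_at_1[OF assms(4,5,3), of n] by auto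

end
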